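(* Inner Nonlinear Markov Rewards (INMR), Inner Multi-Objective RL (IMORL) and Functions from Trajectories to Reals (FTR) are equally expressive: $\mathrm{INMR}\sim_{\mathrm{EXPR}}\mathrm{IMORL}\sim_{\mathrm{EXPR}}\mathrm{FTR}$. That is, for every environment $E$, $\mathrm{Ord}_{\mathrm{INMR}}(E)=\mathrm{Ord}_{\mathrm{IMORL}}(E)=\mathrm{Ord}_{\mathrm{FTR}}(E)$.
   Context: An environment is a tuple $E=(\mathcal S,\mathcal A,\mathcal T,\mathcal I)$ where $\mathcal S,\mathcal A$ are finite nonempty sets, $\mathcal T:\mathcal S\times\mathcal A\to\Delta(\mathcal S)$ and $\mathcal I\in\Delta(\mathcal S)$. A policy is a map $\pi:\mathcal S\to\Delta(\mathcal A)$ (stationary, possibly stochastic); $\Pi^E$ denotes the set of all policies. A trajectory is an infinite sequence $\xi=(s_0,a_0,s_1,a_1,\dots)\in\Xi:=\mathcal S\times(\mathcal A\times\mathcal S)^\omega$; under a policy $\pi$ it is generated by $s_0\sim\mathcal I$, $a_t\sim\pi(s_t)$, $s_{t+1}\sim\mathcal T(s_t,a_t)$, and $\mathbb E^\pi_\xi$, $\mathbb P^\pi$ denote expectation and probability under this distribution. An objective-specification formalism $X$ assigns to each environment $E$ a set of objective specifications, each of which induces a total preorder (transitive and strongly connected relation) $\succeq$ on $\Pi^E$; $\mathrm{Ord}_X(E)$ is the set of total preorders so induced. When a specification defines a scalar $J:\Pi^E\to\mathbb R$, it induces $\pi_1\succeq\pi_2\iff J(\pi_1)\ge J(\pi_2)$.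 We write $X\succeq_{\mathrm{EXPR}}Y$ iff $\mathrm{Ord}_Y(E)\subseteq\mathrm{Ord}_X(E)$ for every environment $E$, and $X\sim_{\mathrm{EXPR}}Y$ iff $X\succeq_{\mathrm{EXPR}}Y$ and $Y\succeq_{\mathrm{EXPR}}X$. For functions of trajectories below, functions are assumed Borel measurable (with the product topology on $\Xi$) and a specification is admissible only if all expectations appearing in its $J$ are well-defined and finite for every policy. INMR: a specification is $(\mathcal R,f,\gamma)$ with $\mathcal R:\mathcal S\times\mathcal A\times\mathcal S\to\mathbb R$, $f:\mathbb R\to\mathbb R$, $\gamma\in[0,1)$, and $J(\pi)=\mathbb E^\pi_\xi\big[f\big(\sum_{t=0}^\infty\gamma^t\mathcal R(s_t,a_t,s_{t+1})\big)\big]$. IMORL: a specification is $(k,\mathcal R,f,\gamma)$ with $k\in\mathbb N$, $\mathcal R:\mathcal S\times\mathcal A\times\mathcal S\to\mathbb R^k$ with components $\mathcal R_i$, $f:\mathbb R^k\to\mathbb R$, $\gamma\in[0,1)$, and $J(\pi)=\mathbb E^\pi_\xi[f(G_1(\xi),\dots,G_k(\xi))]$ where $G_i(\xi)=\sum_{t=0}^\infty\gamma^t\mathcal R_i(s_t,a_t,s_{t+1})$. FTR: a specification is $(f)$ with $f:\Xi\to\mathbb R$ and $J(\pi)=\mathbb E^\pi_\xi[f(\xi)]$. *)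

theory Defs
  imports "HOL-Probability.Probability"
begin

text \<open>
  Environment E = (S, A, T, I): the finite nonempty state/action sets are the
  types 's::finite and 'a::finite, the transition kernel is T :: 's => 'a => 's pmf,
  the initial distribution is I :: 's pmf.  A (stationary, stochastic) policy is any
  map 's => 'a pmf; the set of all policies is UNIV.

  A trajectory (s0,a0,s1,a1,...) is represented as the stream of pairs
  (s0,a0),(s1,a1),...; the measurable space of trajectories is the product
  sigma-algebra of the discrete spaces, i.e. the Borel sigma-algebra of the product
  topology (the space is second countable).
\<close>

abbreviation traj_space :: "('s \<times> 'a) stream measure" where
  "traj_space \<equiv> stream_space (count_space UNIV)"

fun prefix_cont :: "('s \<Rightarrow> 'a \<Rightarrow> 's pmf) \<Rightarrow> ('s \<Rightarrow> 'a pmf) \<Rightarrow> 's \<Rightarrow> 'a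
    \<Rightarrow> ('s \<times> 'a) list \<Rightarrow> real" where
  "prefix_cont T \<pi> s a [] = 1"
| "prefix_cont T \<pi> s a ((s', a') # xs) =
     pmf (T s a) s' * pmf (\<pi> s') a' * prefix_cont T \<pi> s' a' xs"

fun prefix_prob :: "('s \<Rightarrow> 'a \<Rightarrow> 's pmf) \<Rightarrow> 's pmf \<Rightarrow> ('s \<Rightarrow> 'a pmf)
    \<Rightarrow> ('s \<times> 'a) list \<Rightarrow> real" where
  "prefix_prob T I \<pi> [] = 1"
| "prefix_prob T I \<pi> ((s, a) # xs) = pmf I s * pmf (\<pi> s) a * prefix_cont T \<pi> s a xs"

text \<open>The trajectory distribution under policy pi: the (unique) measure on trajectory
  space whose cylinder probabilities are those of the process
  s0 ~ I, a_t ~ pi(s_t), s_(t+1) ~ T(s_t,a_t).\<close>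

definition is_traj_law :: "('s \<Rightarrow> 'a \<Rightarrow> 's pmf) \<Rightarrow> 's pmf \<Rightarrow> ('s \<Rightarrow> 'a pmf)
    \<Rightarrow> ('s \<times> 'a) stream measure \<Rightarrow> bool" where
  "is_traj_law T I \<pi> M \<longleftrightarrow>
     sets M = sets traj_space \<and>
     (\<forall>xs. emeasure M (sstart UNIV xs) = ennreal (prefix_prob T I \<pi> xs))"

definition traj_law :: "('s \<Rightarrow> 'a \<Rightarrow> 's pmf) \<Rightarrow> 's pmf \<Rightarrow> ('s \<Rightarrow> 'a pmf)
    \<Rightarrow> ('s \<times> 'a) stream measure" where
  "traj_law T I \<pi> = (THE M. is_traj_law T I \<pi> M)"

definition disc_return :: "real \<Rightarrow> ('s \<Rightarrow> 'a \<Rightarrow> 's \<Rightarrow> real) \<Rightarrow> ('s \<times> 'a) stream \<Rightarrow> real" where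
  "disc_return \<gamma> R \<xi> =
     (\<Sum>t. \<gamma> ^ t * R (fst (\<xi> !! t)) (snd (\<xi> !! t)) (fst (\<xi> !! Suc t)))"

definition ord_of :: "(('s \<Rightarrow> 'a pmf) \<Rightarrow> real) \<Rightarrow> (('s \<Rightarrow> 'a pmf) \<times> ('s \<Rightarrow> 'a pmf)) set" where
  "ord_of J = {(\<pi>1, \<pi>2). J \<pi>1 \<ge> J \<pi>2}"

definition Ord_INMR :: "('s \<Rightarrow> 'a \<Rightarrow> 's pmf) \<Rightarrow> 's pmf
    \<Rightarrow> (('s \<Rightarrow> 'a pmf) \<times> ('s \<Rightarrow> 'a pmf)) set set" where
  "Ord_INMR T I =
    {ord_of (\<lambda>\<pi>. \<integral>\<xi>. f (disc_return \<gamma> R \<xi>) \<partial>traj_law T I \<pi>) | R f \<gamma>.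
       0 \<le> \<gamma> \<and> \<gamma> < 1 \<and> f \<in> borel_measurable borel \<and>
       (\<forall>\<pi>. integrable (traj_law T I \<pi>) (\<lambda>\<xi>. f (disc_return \<gamma> R \<xi>)))}"

definition Ord_IMORL :: "('s \<Rightarrow> 'a \<Rightarrow> 's pmf) \<Rightarrow> 's pmf
    \<Rightarrow> (('s \<Rightarrow> 'a pmf) \<times> ('s \<Rightarrow> 'a pmf)) set set" where
  "Ord_IMORL T I =
    {ord_of (\<lambda>\<pi>. \<integral>\<xi>. f (\<lambda>i\<in>{..<k}. disc_return \<gamma> (R i) \<xi>) \<partial>traj_law T I \<pi>)
       | (k::nat) (R :: nat \<Rightarrow> 's \<Rightarrow> 'a \<Rightarrow> 's \<Rightarrow> real) f \<gamma>.
       0 \<le> \<gamma> \<and> \<gamma> < 1 \<and> f \<in> borel_measurable (\<Pi>\<^sub>M i\<in>{..<k}. (borel :: real measure)) \<and>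
       (\<forall>\<pi>. integrable (traj_law T I \<pi>)
              (\<lambda>\<xi>. f (\<lambda>i\<in>{..<k}. disc_return \<gamma> (R i) \<xi>)))}"

definition Ord_FTR :: "('s \<Rightarrow> 'a \<Rightarrow> 's pmf) \<Rightarrow> 's pmf
    \<Rightarrow> (('s \<Rightarrow> 'a pmf) \<times> ('s \<Rightarrow> 'a pmf)) set set" where
  "Ord_FTR T I =
    {ord_of (\<lambda>\<pi>. \<integral>\<xi>. f \<xi> \<partial>traj_law T I \<pi>) | f.
       f \<in> borel_measurable traj_space \<and> (\<forall>\<pi>. integrable (traj_law T I \<pi>) f)}"

end

theory Submission
  imports Defs
begin

text \<open>
  INMR embeds into IMORL with a single objective, and IMORL into FTR because the
  vector of discounted returns is a measurable function of the trajectory.  For the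
  converse, enumerate the finitely many state-action pairs as digits
  \<open>0, \<dots>, c - 1\<close> and take that digit as reward with discount \<open>1 / (c + 1)\<close>: the
  discounted return is then the base-\<open>(c + 1)\<close> expansion of the trajectory.  Since
  the digit \<open>c\<close> never occurs, the expansion has no ambiguity of the kind
  \<open>0.0999\<dots> = 0.1\<close>, so the digits, hence the trajectory, are recovered from the
  return by a Borel map, and every FTR objective factors through the return.
\<close>

lemma summable_power_mult_bounded:
  fixes g :: real and d :: "nat \<Rightarrow> real"
  assumes "0 \<le> g" "g < 1" "\<And>t. \<bar>d t\<bar> \<le> M"
  shows "summable (\<lambda>t. g ^ t * d t)"
proof (rule summable_comparison_test')
  show "summable (\<lambda>t. M * g ^ t)"
    using assms by (intro summable_mult summable_geometric) auto
  show "norm (g ^ t * d t) \<le> M * g ^ t" for t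
    using assms mult_right_mono[OF assms(3)[of t], of "g ^ t"] by (simp add: abs_mult mult.commute)
qed

lemma power_mult_suminf_split:
  fixes b :: real and d :: "nat \<Rightarrow> real"
  assumes "b \<noteq> 0" "summable (\<lambda>t. (1/b) ^ t * d t)"
  shows "b ^ n * (\<Sum>t. (1/b) ^ t * d t)
           = (\<Sum>t\<le>n. b ^ (n - t) * d t) + (\<Sum>t. (1/b) ^ Suc t * d (t + Suc n))"
proof -
  have "b ^ n * (\<Sum>t. (1/b) ^ t * d t)
          = (\<Sum>t. b ^ n * ((1/b) ^ (t + Suc n) * d (t + Suc n))) + (\<Sum>t<Suc n. b ^ n * ((1/b) ^ t * d t))"
    using suminf_split_initial_segment[OF assms(2), of "Suc n"]
      suminf_mult[OF summable_ignore_initial_segment[OF assms(2)], of "b ^ n" "Suc n"]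
    by (simp add: distrib_left sum_distrib_left)
  also have "(\<Sum>t. b ^ n * ((1/b) ^ (t + Suc n) * d (t + Suc n))) = (\<Sum>t. (1/b) ^ Suc t * d (t + Suc n))"
    using assms(1) by (simp add: power_add power_one_over field_simps)
  also have "(\<Sum>t<Suc n. b ^ n * ((1/b) ^ t * d t)) = (\<Sum>t\<le>n. b ^ (n - t) * d t)"
    using assms(1) by (intro sum.cong) (auto simp: lessThan_Suc_atMost power_one_over power_diff)
  finally show ?thesis by simp
qed

lemma digit_tail_bounds:
  fixes c :: nat and d :: "nat \<Rightarrow> nat"
  assumes digits: "\<And>t. d t < c"
  defines "S \<equiv> (\<Sum>t. (1 / (real c + 1)) ^ Suc t * real (d t))"
  shows "0 \<le> S" "S < 1"
proof -
  define q where "q = 1 / (real c + 1)"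
  have q: "0 < q" "q < 1" using digits[of 0] by (auto simp: q_def)
  have "summable (\<lambda>t. q ^ t * real (d t))"
    using q digits less_imp_le by (intro summable_power_mult_bounded[where M = c]) auto
  then have sm: "summable (\<lambda>t. q ^ Suc t * real (d t))"
    by (simp add: summable_mult mult.assoc)
  have smg: "summable (\<lambda>t. q ^ Suc t * (real c - 1))"
    using q by (intro summable_mult2) (simp add: summable_mult)
  show "0 \<le> S" unfolding S_def q_def[symmetric] using q by (intro suminf_nonneg[OF sm]) auto
  have "S \<le> (\<Sum>t. q ^ Suc t * (real c - 1))" unfolding S_def q_def[symmetric]
  proof (rule suminf_le[OF _ sm smg])
    show "q ^ Suc t * real (d t) \<le> q ^ Suc t * (real c - 1)" for t
      using q digits[of t] by (intro mult_left_mono) auto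
  qed
  also have "\<dots> = q * (real c - 1) * (\<Sum>t. q ^ t)"
    using suminf_mult[OF summable_geometric[of q], of "q * (real c - 1)"] q
    by (simp add: mult_ac)
  also have "(\<Sum>t. q ^ t) = (real c + 1) / real c"
    using suminf_geometric[of q] q digits[of 0] by (simp add: q_def field_simps)
  also have "q * (real c - 1) * ((real c + 1) / real c) = (real c - 1) / real c"
    by (simp add: q_def)
  also have "\<dots> < 1" using digits[of 0] by simp
  finally show "S < 1" .
qed

lemma floor_digit_series_mod:
  fixes c :: nat and d :: "nat \<Rightarrow> nat"
  assumes "\<And>t. d t < c"
  shows "\<lfloor>(real c + 1) ^ n * (\<Sum>t. (1 / (real c + 1)) ^ t * real (d t))\<rfloor> mod (int c + 1) = int (d n)"
proof -
  define P where "P = (\<Sum>t\<le>n. (c + 1) ^ (n - t) * d t)"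
  have "0 < c" using assms[of 0] by simp
  then have sm: "summable (\<lambda>t. (1 / (real c + 1)) ^ t * real (d t))"
    using assms less_imp_le by (intro summable_power_mult_bounded[where M = c]) auto
  have "(real c + 1) ^ n * (\<Sum>t. (1 / (real c + 1)) ^ t * real (d t))
          = real P + (\<Sum>t. (1 / (real c + 1)) ^ Suc t * real (d (t + Suc n)))"
    using power_mult_suminf_split[OF _ sm, of n] by (simp add: P_def add.commute)
  then have "\<lfloor>(real c + 1) ^ n * (\<Sum>t. (1 / (real c + 1)) ^ t * real (d t))\<rfloor> = int P"
    using digit_tail_bounds[of "\<lambda>t. d (t + Suc n)" c] assms by (intro floor_unique) auto
  moreover have "P mod (c + 1) = d n"
  proof -
    have "(c + 1) dvd (\<Sum>t<n. (c + 1) ^ (n - t) * d t)"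
      by (intro dvd_sum) (simp add: Suc_diff_Suc)
    then show ?thesis
      using assms[of n] by (auto simp: P_def lessThan_Suc_atMost[symmetric] mod_add_left_eq[symmetric])
  qed
  ultimately show ?thesis using zmod_int[of P "c + 1"] by (simp add: add.commute)
qed

lemma disc_return_measurable:
  "disc_return \<gamma> R \<in> borel_measurable (traj_space :: ('s::countable \<times> 'a::countable) stream measure)"
  unfolding disc_return_def
proof (rule borel_measurable_suminf)
  fix t
  have "(\<lambda>\<xi>::('s \<times> 'a) stream. (\<xi> !! t, \<xi> !! Suc t)) \<in> traj_space \<rightarrow>\<^sub>M count_space UNIV"
    using measurable_Pair[OF measurable_snth measurable_snth] by (simp add: pair_measure_countable)
  from measurable_compose[OF this measurable_count_space
      [where f = "\<lambda>(x, y). \<gamma> ^ t * R (fst x) (snd x) (fst y)"]]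
  show "(\<lambda>\<xi>. \<gamma> ^ t * R (fst (\<xi> !! t)) (snd (\<xi> !! t)) (fst (\<xi> !! Suc t))) \<in> borel_measurable traj_space"
    by simp
qed

lemma disc_return_measurable_left_inverse:
  obtains \<gamma> :: real and R :: "'s::finite \<Rightarrow> 'a::finite \<Rightarrow> 's \<Rightarrow> real"
    and dec :: "real \<Rightarrow> ('s \<times> 'a) stream"
  where "0 \<le> \<gamma>" "\<gamma> < 1" "dec \<in> borel \<rightarrow>\<^sub>M traj_space" "\<And>\<xi>. dec (disc_return \<gamma> R \<xi>) = \<xi>"
proof -
  define c where "c = card (UNIV :: ('s \<times> 'a) set)"
  obtain e :: "'s \<times> 'a \<Rightarrow> nat" where e: "bij_betw e UNIV {0..<c}"
    using ex_bij_betw_finite_nat[of "UNIV :: ('s \<times> 'a) set"] unfolding c_def by auto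
  then have "inj e" and e_less: "\<And>p. e p < c"
    by (auto simp: bij_betw_def)
  define R where "R = (\<lambda>(s::'s) (a::'a) (s'::'s). real (e (s, a)))"
  define dec where "dec = (\<lambda>x::real. smap (\<lambda>n. inv e (nat (\<lfloor>(real c + 1) ^ n * x\<rfloor> mod (int c + 1)))) nats)"
  have "dec (disc_return (1 / (real c + 1)) R \<xi>) = \<xi>" for \<xi>
  proof -
    have "disc_return (1 / (real c + 1)) R \<xi> = (\<Sum>t. (1 / (real c + 1)) ^ t * real (e (\<xi> !! t)))"
      by (simp add: disc_return_def R_def)
    then have "(\<lambda>n. inv e (nat (\<lfloor>(real c + 1) ^ n * disc_return (1 / (real c + 1)) R \<xi>\<rfloor> mod (int c + 1))))
                 = snth \<xi>"
      using floor_digit_series_mod[of "\<lambda>t. e (\<xi> !! t)", OF e_less] \<open>inj e\<close> by auto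
    then show ?thesis
      by (simp add: dec_def stream_smap_nats[symmetric])
  qed
  moreover have "dec \<in> borel \<rightarrow>\<^sub>M traj_space"
    unfolding dec_def
  proof (rule measurable_stream_space2)
    fix n
    have "(\<lambda>x::real. \<lfloor>(real c + 1) ^ n * x\<rfloor>) \<in> borel \<rightarrow>\<^sub>M count_space UNIV"
      by measurable
    from measurable_compose[OF this measurable_count_space
        [where f = "\<lambda>z. inv e (nat (z mod (int c + 1)))"]]
    show "(\<lambda>x. smap (\<lambda>n. inv e (nat (\<lfloor>(real c + 1) ^ n * x\<rfloor> mod (int c + 1)))) nats !! n)
            \<in> borel \<rightarrow>\<^sub>M count_space UNIV"
      by simp
  qed
  moreover have "0 < c"
    using e_less[of undefined] by simp
  ultimately show ?thesis
    by (intro that[of "1 / (real c + 1)"]) auto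
qed

lemma Ord_INMR_subset_Ord_IMORL: "Ord_INMR T I \<subseteq> Ord_IMORL T I"
proof
  fix x assume "x \<in> Ord_INMR T I"
  then obtain R f \<gamma> where x: "x = ord_of (\<lambda>\<pi>. \<integral>\<xi>. f (disc_return \<gamma> R \<xi>) \<partial>traj_law T I \<pi>)"
    and h: "0 \<le> \<gamma>" "\<gamma> < 1" "f \<in> borel_measurable borel"
      "\<forall>\<pi>. integrable (traj_law T I \<pi>) (\<lambda>\<xi>. f (disc_return \<gamma> R \<xi>))"
    unfolding Ord_INMR_def by blast
  define f' where "f' = (\<lambda>v::nat \<Rightarrow> real. f (v 0))"
  have "f' \<in> borel_measurable (\<Pi>\<^sub>M i\<in>{..<1::nat}. (borel :: real measure))"
    unfolding f'_def using h(3) by measurable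
  moreover have "(\<lambda>\<xi>. f' (\<lambda>i\<in>{..<1}. disc_return \<gamma> R \<xi>)) = (\<lambda>\<xi>. f (disc_return \<gamma> R \<xi>))"
    by (simp add: f'_def)
  ultimately show "x \<in> Ord_IMORL T I"
    unfolding Ord_IMORL_def x using h
    by (intro CollectI exI[of _ 1] exI[of _ "\<lambda>_. R"] exI[of _ f'] exI[of _ \<gamma>]) simp
qed

lemma Ord_IMORL_subset_Ord_FTR:
  fixes T :: "'s::countable \<Rightarrow> 'a::countable \<Rightarrow> 's pmf"
  shows "Ord_IMORL T I \<subseteq> Ord_FTR T I"
proof
  fix x assume "x \<in> Ord_IMORL T I"
  then obtain k :: nat and R f \<gamma> where x: "x = ord_of (\<lambda>\<pi>. \<integral>\<xi>. f (\<lambda>i\<in>{..<k}. disc_return \<gamma> (R i) \<xi>) \<partial>traj_law T I \<pi>)"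
    and h: "f \<in> borel_measurable (\<Pi>\<^sub>M i\<in>{..<k}. (borel :: real measure))"
      "\<forall>\<pi>. integrable (traj_law T I \<pi>) (\<lambda>\<xi>. f (\<lambda>i\<in>{..<k}. disc_return \<gamma> (R i) \<xi>))"
    unfolding Ord_IMORL_def by auto
  have "(\<lambda>\<xi>. f (\<lambda>i\<in>{..<k}. disc_return \<gamma> (R i) \<xi>)) \<in> borel_measurable (traj_space :: ('s \<times> 'a) stream measure)"
    by (rule measurable_compose[OF measurable_restrict[OF disc_return_measurable] h(1)])
  then show "x \<in> Ord_FTR T I"
    unfolding Ord_FTR_def x using h(2) by blast
qed

lemma Ord_FTR_subset_Ord_INMR:
  fixes T :: "'s::finite \<Rightarrow> 'a::finite \<Rightarrow> 's pmf"
  shows "Ord_FTR T I \<subseteq> Ord_INMR T I"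
proof
  fix x assume "x \<in> Ord_FTR T I"
  then obtain f where x: "x = ord_of (\<lambda>\<pi>. \<integral>\<xi>. f \<xi> \<partial>traj_law T I \<pi>)"
    and h: "f \<in> borel_measurable (traj_space :: ('s \<times> 'a) stream measure)"
      "\<forall>\<pi>. integrable (traj_law T I \<pi>) f"
    unfolding Ord_FTR_def by blast
  obtain \<gamma> R and dec :: "real \<Rightarrow> ('s \<times> 'a) stream"
    where \<gamma>: "0 \<le> \<gamma>" "\<gamma> < 1" and dec: "dec \<in> borel \<rightarrow>\<^sub>M traj_space"
      and dec_inverse: "\<And>\<xi>. dec (disc_return \<gamma> R \<xi>) = \<xi>"
    using disc_return_measurable_left_inverse by metis
  have "(\<lambda>\<xi>. (f \<circ> dec) (disc_return \<gamma> R \<xi>)) = f"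
    by (simp add: dec_inverse)
  moreover have "f \<circ> dec \<in> borel_measurable borel"
    using measurable_comp[OF dec h(1)] .
  ultimately show "x \<in> Ord_INMR T I"
    unfolding Ord_INMR_def x using h(2) \<gamma>
    by (intro CollectI exI[of _ R] exI[of _ "f \<circ> dec"] exI[of _ \<gamma>]) simp
qed

theorem theorem1:
  fixes T :: "'s::finite \<Rightarrow> 'a::finite \<Rightarrow> 's pmf" and I :: "'s pmf"
  shows "Ord_INMR T I = Ord_IMORL T I \<and> Ord_IMORL T I = Ord_FTR T I"
  using Ord_INMR_subset_Ord_IMORL[of T I] Ord_IMORL_subset_Ord_FTR[of T I]
    Ord_FTR_subset_Ord_INMR[of T I]
  by blast

end
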